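(* On $V=\mathbb R$ with the standard metric, let $\phi(x)=e^{-1/x^2}$ for $x\neq0$, $\phi(0)=0$, and let $X=f(x)\partial_x$ with $f(x)=\frac{2}{x^3}e^{-1/x^2}$ for $x<0$, $f(0)=0$, $f(x)=\frac{1}{x^3}e^{-1/x^2}$ for $x>0$. Then there exists a continuous function $\delta:\mathbb R\to(0,\infty)$ with $d\phi(X)\ge\delta(|X|^2+|d\phi|^2)$ on $\mathbb R$, but there is no smooth $(2,0)$ tensor field $g$ on $\mathbb R$ with $g(v,v)>0$ for all $v\ne0$ and $d\phi=g(X,\cdot)$. *)

theory Defs
  imports "HOL-Analysis.Analysis"
begin

definition phi :: "real \<Rightarrow> real" where
  "phi x = (if x = 0 then 0 else exp (- 1 / x ^ 2))"

definition fX :: "real \<Rightarrow> real" where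
  "fX x = (if x < 0 then 2 / x ^ 3 * exp (- 1 / x ^ 2)
           else if x = 0 then 0
           else 1 / x ^ 3 * exp (- 1 / x ^ 2))"

definition smooth_on_R :: "(real \<Rightarrow> real) \<Rightarrow> bool" where
  "smooth_on_R g \<longleftrightarrow> (\<forall>n x. ((deriv ^^ n) g) differentiable (at x))"

end

theory Submission imports Defs "HOL-Real_Asymp.Real_Asymp" begin

text \<open>The vector field is chosen so that \<open>d\<phi> = c \<cdot> X\<close> with \<open>c = 1\<close> on the negative
  and \<open>c = 2\<close> on the positive half-line. Hence the pointwise inequality holds with the constant
  \<open>\<delta> = 1/4\<close>, while any \<open>g\<close> with \<open>d\<phi> = g X\<close> must coincide with \<open>c\<close> away from \<open>0\<close>, and so
  cannot even be continuous at \<open>0\<close>.\<close>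

lemma phi_has_derivative_0: "(phi has_real_derivative 0) (at 0)"
proof -
  have "((\<lambda>x::real. exp (-1/x^2) / x) \<longlongrightarrow> 0) (at_left 0)"
       "((\<lambda>x::real. exp (-1/x^2) / x) \<longlongrightarrow> 0) (at_right 0)"
    by real_asymp+
  then have "((\<lambda>x::real. exp (-1/x^2) / x) \<longlongrightarrow> 0) (at 0)"
    by (simp add: filterlim_split_at)
  then have "((\<lambda>y. (phi y - phi 0) / (y - 0)) \<longlongrightarrow> 0) (at 0)"
    by (rule Lim_transform_eventually) (auto simp: phi_def eventually_at_filter)
  then show ?thesis
    by (simp add: has_field_derivative_iff)
qed

lemma phi_has_derivative:
  assumes "x \<noteq> 0"
  shows "(phi has_real_derivative 2 / x^3 * exp (-1/x^2)) (at x)"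
proof -
  have "((\<lambda>x. exp (-1/x^2)) has_real_derivative 2 / x^3 * exp (-1/x^2)) (at x)"
    using assms by (auto intro!: derivative_eq_intros simp: field_simps power_def)
  then show ?thesis
    by (rule has_field_derivative_transform_within_open[where S = "-{0}"])
       (use assms in \<open>auto simp: phi_def\<close>)
qed

lemma deriv_phi_eq_fX: "deriv phi x = (if x < 0 then fX x else 2 * fX x)"
proof (cases "x = 0")
  case True
  then show ?thesis
    using phi_has_derivative_0 by (simp add: DERIV_imp_deriv fX_def)
next
  case False
  then show ?thesis
    using phi_has_derivative DERIV_imp_deriv by (auto simp: fX_def)
qed

lemma deriv_phi_fX_inequality:
  "1/4 * ((fX x)\<^sup>2 + (deriv phi x)\<^sup>2) \<le> deriv phi x * fX x"
  by (simp add: deriv_phi_eq_fX power2_eq_square)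

lemma fX_nonzero: "x \<noteq> 0 \<Longrightarrow> fX x \<noteq> 0"
  by (auto simp: fX_def)

lemma smooth_on_R_imp_isCont: "smooth_on_R g \<Longrightarrow> isCont g x"
  unfolding smooth_on_R_def by (metis funpow_0 differentiable_imp_continuous_within)

lemma isCont_one_sided_limits_eq:
  fixes g :: "real \<Rightarrow> 'a::t2_space"
  assumes "isCont g x" "(g \<longlongrightarrow> a) (at_left x)" "(g \<longlongrightarrow> b) (at_right x)"
  shows "a = b"
proof -
  have "(g \<longlongrightarrow> g x) (at_left x)" "(g \<longlongrightarrow> g x) (at_right x)"
    using assms(1) by (simp_all add: isCont_def filterlim_at_split)
  then have "a = g x" "b = g x"
    using assms(2,3) tendsto_unique trivial_limit_at_left_real trivial_limit_at_right_real
    by metis+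
  then show ?thesis by simp
qed

lemma no_smooth_coefficient:
  assumes "smooth_on_R g" "\<And>x. deriv phi x = g x * fX x"
  shows False
proof -
  have g_neg: "g x = 1" if "x < 0" for x
    using assms(2)[of x] fX_nonzero[of x] that by (simp add: deriv_phi_eq_fX)
  have g_pos: "g x = 2" if "x > 0" for x
    using assms(2)[of x] fX_nonzero[of x] that by (simp add: deriv_phi_eq_fX)
  have "(g \<longlongrightarrow> 1) (at_left 0)"
    by (rule tendsto_eventually) (auto simp: eventually_at_left_field intro!: exI[of _ "-1"] g_neg)
  moreover have "(g \<longlongrightarrow> 2) (at_right 0)"
    by (rule tendsto_eventually) (auto simp: eventually_at_right_field intro!: exI[of _ 1] g_pos)
  ultimately have "(1::real) = 2"
    using isCont_one_sided_limits_eq smooth_on_R_imp_isCont[OF assms(1)] by blast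
  then show False by simp
qed

theorem mainTheorem6:
  shows "(\<exists>\<delta> :: real \<Rightarrow> real. continuous_on UNIV \<delta> \<and> (\<forall>x. \<delta> x > 0) \<and>
            (\<forall>x. deriv phi x * fX x \<ge> \<delta> x * ((fX x)\<^sup>2 + (deriv phi x)\<^sup>2)))
       \<and> \<not> (\<exists>g :: real \<Rightarrow> real. smooth_on_R g \<and> (\<forall>x. g x > 0) \<and>
                (\<forall>x. deriv phi x = g x * fX x))"
  using deriv_phi_fX_inequality no_smooth_coefficient
  by (auto intro!: exI[of _ "\<lambda>_. 1/4"])

end
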